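(* Let $n\ge1$ and $\vec p,\vec q\in[0,1]^n$. Let $S_{\vec p}$ be a sum of $n$ independent random variables $X_i\sim\mathrm{Ber}(p_i)$, and similarly $S_{\vec q}$, with variances $\sigma_{\vec p}^2=\sum_ip_i(1-p_i)$ and $\sigma_{\vec q}^2=\sum_iq_i(1-q_i)$, and let $\Delta=\sum_{i=1}^n|p_i-q_i|$. Then $$\mathrm{TV}(S_{\vec p},S_{\vec q})\le\frac{2C_{\mathrm{BCV}}\,\Delta}{\sqrt{\sigma_{\vec p}^2+1}+\sqrt{\sigma_{\vec q}^2+1}}.$$
   Context: $\mathrm{TV}(P,Q)=\frac12\sum_\omega|P(\omega)-Q(\omega)|$ is the total variation distance of laws. $\eta_{\mathrm{BCV}}$ is the sharp Baillon–Cominetti–Vaisman constant: the smallest constant such that every finite sum $Z$ of independent Bernoulli random variables with $\mathrm{Var}(Z)>0$ satisfies $\max_k\mathbb P(Z=k)\le\eta_{\mathrm{BCV}}/\sqrt{\mathrm{Var}(Z)}$ ($\eta_{\mathrm{BCV}}\approx0.4688$). $C_{\mathrm{BCV}}=\sqrt{5/4+\eta_{\mathrm{BCV}}^2}$. *)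

theory Defs
  imports "HOL-Probability.Probability"
begin

fun bern_sum :: "(nat \<Rightarrow> real) \<Rightarrow> nat \<Rightarrow> nat pmf" where
  "bern_sum p 0 = return_pmf 0"
| "bern_sum p (Suc n) =
     bind_pmf (bern_sum p n) (\<lambda>s. map_pmf (\<lambda>b. s + of_bool b) (bernoulli_pmf (p n)))"

definition bern_var :: "(nat \<Rightarrow> real) \<Rightarrow> nat \<Rightarrow> real" where
  "bern_var p n = (\<Sum>i<n. p i * (1 - p i))"

definition TV :: "nat pmf \<Rightarrow> nat pmf \<Rightarrow> real" where
  "TV P Q = 1/2 * (\<Sum>\<^sub>\<infinity>k. \<bar>pmf P k - pmf Q k\<bar>)"

definition eta_BCV :: real where
  "eta_BCV = Inf {c. \<forall>(n::nat) (p::nat \<Rightarrow> real).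
      (\<forall>i<n. 0 \<le> p i \<and> p i \<le> 1) \<longrightarrow> bern_var p n > 0 \<longrightarrow>
      (\<forall>k. pmf (bern_sum p n) k \<le> c / sqrt (bern_var p n))}"

definition C_BCV :: real where
  "C_BCV = sqrt (5/4 + eta_BCV^2)"

end

theory Submission
  imports Defs
begin

text \<open>Move the parameters along the segment \<open>r(t) = p + t (q - p)\<close>. The mass function of
  the Bernoulli sum is multilinear in \<open>r\<close>, and its derivative in \<open>r i\<close> is \<open>W(k - 1) - W(k)\<close>,
  where \<open>W\<close> is the law of the sum without the \<open>i\<close>-th summand. Since \<open>W\<close> is unimodal, this
  difference has \<open>\<ell>\<^sub>1\<close>-norm \<open>2 max W\<close>, and \<open>max W \<le> C_BCV / sqrt (\<sigma>\<^sup>2 + 1)\<close> for the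
  variance \<open>\<sigma>\<^sup>2\<close> of \<open>r(t)\<close>: by the BCV bound if \<open>\<sigma>\<^sup>2\<close> is large, trivially otherwise.
  The variance is concave in \<open>t\<close>, so \<open>\<sigma>\<^sup>2 + 1 \<ge> A + t (B - A)\<close> with
  \<open>A = \<sigma>\<^sub>p\<^sup>2 + 1\<close> and \<open>B = \<sigma>\<^sub>q\<^sup>2 + 1\<close>; finally
  \<open>\<integral>\<^sub>0\<^sup>1 dt / sqrt (A + t (B - A)) = 2 / (sqrt A + sqrt B)\<close>.

  For \<open>eta_BCV\<close> not to be the infimum of the empty set, some admissible constant is needed;
  log-concavity and unimodality of the mass function give the crude one \<open>sqrt 648\<close>.\<close>

section \<open>The mass function as a polynomial in the parameters\<close>

definition seq_shift :: "(nat \<Rightarrow> real) \<Rightarrow> nat \<Rightarrow> real" where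
  "seq_shift f k = (if k = 0 then 0 else f (k - 1))"

definition conv_bernoulli :: "(nat \<Rightarrow> real) \<Rightarrow> real \<Rightarrow> nat \<Rightarrow> real" where
  "conv_bernoulli f a k = (1 - a) * f k + a * seq_shift f k"

text \<open>Unlike \<^const>\<open>bern_sum\<close>, this is meaningful for parameters outside \<open>[0, 1]\<close>,
  so it can be differentiated in them.\<close>
fun bern_dens :: "(nat \<Rightarrow> real) \<Rightarrow> nat \<Rightarrow> nat \<Rightarrow> real" where
  "bern_dens r 0 = (\<lambda>k. if k = 0 then 1 else 0)"
| "bern_dens r (Suc n) = conv_bernoulli (bern_dens r n) (r n)"

lemma bern_dens_cong: "(\<And>j. j < n \<Longrightarrow> r j = r' j) \<Longrightarrow> bern_dens r n = bern_dens r' n"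
  by (induction n) auto

lemma bern_dens_eq_0: "n < k \<Longrightarrow> bern_dens r n k = 0"
  by (induction n arbitrary: k) (auto simp: conv_bernoulli_def seq_shift_def)

lemma bern_dens_nonneg: "\<forall>j<n. 0 \<le> r j \<and> r j \<le> 1 \<Longrightarrow> 0 \<le> bern_dens r n k"
  by (induction n arbitrary: k) (auto simp: conv_bernoulli_def seq_shift_def)

lemma sum_mult_seq_shift: "(\<Sum>k<Suc N. g k * seq_shift f k) = (\<Sum>k<N. g (Suc k) * f k)"
  by (subst sum.lessThan_Suc_shift) (simp add: seq_shift_def)

lemma sum_bern_dens: "n < N \<Longrightarrow> (\<Sum>k<N. bern_dens r n k) = 1"
proof (induction n arbitrary: N)
  case 0
  then show ?case by (simp add: sum.If_cases lessThan_def)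
next
  case (Suc n)
  then obtain N' where N': "N = Suc N'" "n < N'" by (cases N) auto
  have "(\<Sum>k<N. bern_dens r (Suc n) k)
      = (1 - r n) * (\<Sum>k<N. bern_dens r n k) + r n * (\<Sum>k<N. 1 * seq_shift (bern_dens r n) k)"
    by (simp add: conv_bernoulli_def sum.distrib sum_distrib_left)
  also have "(\<Sum>k<N. 1 * seq_shift (bern_dens r n) k) = (\<Sum>k<N'. bern_dens r n k)"
    unfolding N' sum_mult_seq_shift by simp
  finally show ?case using Suc.IH[of N] Suc.IH[of N'] N' by simp
qed

lemma sum_bern_dens_le_1:
  assumes "\<forall>j<n. 0 \<le> r j \<and> r j \<le> 1"
  shows "(\<Sum>k<N. bern_dens r n k) \<le> 1"
proof -
  have "(\<Sum>k<N. bern_dens r n k) \<le> (\<Sum>k<max N (Suc n). bern_dens r n k)"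
    using bern_dens_nonneg[OF assms] by (intro sum_mono2) auto
  also have "\<dots> = 1" by (rule sum_bern_dens) simp
  finally show ?thesis .
qed

lemma sum_sq_dev_bern_dens:
  "n < N \<Longrightarrow> (\<Sum>k<N. (real k - c)^2 * bern_dens r n k) = bern_var r n + ((\<Sum>i<n. r i) - c)^2"
proof (induction n arbitrary: N c)
  case 0
  then show ?case by (simp add: bern_var_def if_distrib sum.If_cases lessThan_def)
next
  case (Suc n)
  then obtain N' where N': "N = Suc N'" "n < N'" by (cases N) auto
  have "(\<Sum>k<N. (real k - c)^2 * bern_dens r (Suc n) k) = (\<Sum>k<N.
      (1 - r n) * ((real k - c)^2 * bern_dens r n k) + r n * ((real k - c)^2 * seq_shift (bern_dens r n) k))"
    by (simp add: conv_bernoulli_def algebra_simps)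
  also have "\<dots> = (1 - r n) * (\<Sum>k<N. (real k - c)^2 * bern_dens r n k)
      + r n * (\<Sum>k<N. (real k - c)^2 * seq_shift (bern_dens r n) k)"
    by (simp add: sum.distrib sum_distrib_left)
  also have "(\<Sum>k<N. (real k - c)^2 * seq_shift (bern_dens r n) k)
      = (\<Sum>k<N'. (real k - (c - 1))^2 * bern_dens r n k)"
    unfolding N' sum_mult_seq_shift by (simp add: algebra_simps)
  also have "\<dots> = bern_var r n + ((\<Sum>i<n. r i) - (c - 1))^2" using Suc.IH N' by simp
  also have "(\<Sum>k<N. (real k - c)^2 * bern_dens r n k) = bern_var r n + ((\<Sum>i<n. r i) - c)^2"
    by (rule Suc.IH) (use N' in simp)
  finally show ?case by (simp add: bern_var_def power2_eq_square algebra_simps)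
qed

lemma pmf_bern_sum:
  "\<forall>j<n. 0 \<le> r j \<and> r j \<le> 1 \<Longrightarrow> pmf (bern_sum r n) k = bern_dens r n k"
proof (induction n arbitrary: k)
  case 0
  then show ?case by simp
next
  case (Suc n)
  have r: "0 \<le> r n" "r n \<le> 1" using Suc.prems by auto
  have IH: "pmf (bern_sum r n) = bern_dens r n" using Suc by auto
  have pmf_Suc: "pmf (map_pmf Suc A) k = seq_shift (pmf A) k" for A :: "nat pmf"
  proof (cases k)
    case 0
    have "Suc -` {0} = {}" by auto
    then show ?thesis using 0 by (simp add: pmf_map seq_shift_def)
  qed (simp add: seq_shift_def pmf_map_inj')
  have swap: "bern_sum r (Suc n) =
      bind_pmf (bernoulli_pmf (r n)) (\<lambda>b. map_pmf (\<lambda>s. s + of_bool b) (bern_sum r n))"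
    by (simp add: map_pmf_def bind_commute_pmf[of "bern_sum r n"])
  have "pmf (bern_sum r (Suc n)) k =
      pmf (map_pmf Suc (bern_sum r n)) k * r n + pmf (bern_sum r n) k * (1 - r n)"
    unfolding swap pmf_bind using r by simp
  then show ?case by (simp add: pmf_Suc IH conv_bernoulli_def)
qed

lemma TV_bern_sum:
  assumes "\<forall>j<n. 0 \<le> p j \<and> p j \<le> 1" and "\<forall>j<n. 0 \<le> q j \<and> q j \<le> 1"
  shows "TV (bern_sum p n) (bern_sum q n) = 1/2 * (\<Sum>k<Suc n. \<bar>bern_dens p n k - bern_dens q n k\<bar>)"
proof -
  have "(\<Sum>\<^sub>\<infinity>k. \<bar>pmf (bern_sum p n) k - pmf (bern_sum q n) k\<bar>) =
        (\<Sum>\<^sub>\<infinity>k\<in>{..<Suc n}. \<bar>bern_dens p n k - bern_dens q n k\<bar>)"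
    by (rule infsum_cong_neutral) (auto simp: pmf_bern_sum assms bern_dens_eq_0)
  then show ?thesis unfolding TV_def by simp
qed

section \<open>Unimodality and log-concavity\<close>

definition unimodal_at :: "(nat \<Rightarrow> real) \<Rightarrow> nat \<Rightarrow> bool" where
  "unimodal_at f m \<longleftrightarrow> (\<forall>k<m. f k \<le> f (Suc k)) \<and> (\<forall>k\<ge>m. f (Suc k) \<le> f k)"

lemma unimodal_at_mono: "unimodal_at f m \<Longrightarrow> i \<le> j \<Longrightarrow> j \<le> m \<Longrightarrow> f i \<le> f j"
  by (rule lift_Suc_mono_le_ivl[of "{..<m}" f i j]) (auto simp: unimodal_at_def)

lemma unimodal_at_antimono: "unimodal_at f m \<Longrightarrow> m \<le> i \<Longrightarrow> i \<le> j \<Longrightarrow> f j \<le> f i"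
  by (rule lift_Suc_antimono_le_ivl[of "{m..}" f i j]) (auto simp: unimodal_at_def)

lemma unimodal_at_max: "unimodal_at f m \<Longrightarrow> f k \<le> f m"
  by (cases "k \<le> m") (auto intro: unimodal_at_mono unimodal_at_antimono)

lemma unimodal_at_conv_bernoulli:
  assumes uni: "unimodal_at f m" and nonneg: "\<And>k. 0 \<le> f k" and a: "0 \<le> a" "a \<le> 1"
  shows "unimodal_at (conv_bernoulli f a) m \<or> unimodal_at (conv_bernoulli f a) (Suc m)"
proof -
  let ?g = "conv_bernoulli f a"
  have step: "?g (Suc k) - ?g k = (1 - a) * (f (Suc k) - f k) + a * (f k - seq_shift f k)" for k
    by (simp add: conv_bernoulli_def seq_shift_def algebra_simps)
  have up: "?g k \<le> ?g (Suc k)" if "k < m" for k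
  proof -
    have "f k \<le> f (Suc k)" using uni that by (simp add: unimodal_at_def)
    moreover have "seq_shift f k \<le> f k"
    proof (cases k)
      case (Suc j)
      then show ?thesis using uni that by (simp add: unimodal_at_def seq_shift_def)
    qed (simp add: seq_shift_def nonneg)
    ultimately have "0 \<le> (1 - a) * (f (Suc k) - f k)" "0 \<le> a * (f k - seq_shift f k)"
      using a by simp_all
    then show ?thesis using step[of k] by linarith
  qed
  have down: "?g (Suc k) \<le> ?g k" if km: "Suc m \<le> k" for k
  proof -
    obtain j where k: "k = Suc j" "m \<le> j" using km by (cases k) auto
    then have "f (Suc k) \<le> f k" "f k \<le> seq_shift f k"
      using uni by (simp_all add: unimodal_at_def seq_shift_def)
    then have "(1 - a) * (f (Suc k) - f k) \<le> 0" "a * (f k - seq_shift f k) \<le> 0"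
      using a by (simp_all add: mult_nonneg_nonpos)
    then show ?thesis using step[of k] by linarith
  qed
  show ?thesis
  proof (cases "?g m \<le> ?g (Suc m)")
    case True
    have "unimodal_at ?g (Suc m)"
      unfolding unimodal_at_def using up down True less_Suc_eq by auto
    then show ?thesis ..
  next
    case False
    have "?g (Suc k) \<le> ?g k" if "m \<le> k" for k
      using down[of k] False that by (cases "k = m") auto
    then have "unimodal_at ?g m"
      unfolding unimodal_at_def using up by auto
    then show ?thesis ..
  qed
qed

lemma bern_dens_unimodal: "\<forall>j<n. 0 \<le> r j \<and> r j \<le> 1 \<Longrightarrow> \<exists>m\<le>n. unimodal_at (bern_dens r n) m"
proof (induction n)
  case 0
  show ?case by (auto simp: unimodal_at_def)
next
  case (Suc n)
  then obtain m where "m \<le> n" "unimodal_at (bern_dens r n) m" by auto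
  moreover have "0 \<le> r n" "r n \<le> 1" using Suc.prems by auto
  moreover have "0 \<le> bern_dens r n k" for k using Suc.prems by (intro bern_dens_nonneg) auto
  ultimately show ?case using unimodal_at_conv_bernoulli[of "bern_dens r n" m "r n"]
    by (auto intro: le_SucI)
qed

text \<open>The \<open>\<ell>\<^sub>1\<close>-distance between a unimodal law and its shift telescopes.\<close>
lemma sum_abs_diff_seq_shift:
  assumes uni: "unimodal_at f m" and "0 \<le> f 0"
  shows "(\<Sum>k<Suc N. \<bar>f k - seq_shift f k\<bar>) = (if N < m then f N else 2 * f m - f N)"
proof (induction N)
  case 0
  then show ?case using assms by (simp add: seq_shift_def)
next
  case (Suc N)
  have "(\<Sum>k<Suc (Suc N). \<bar>f k - seq_shift f k\<bar>)
      = (\<Sum>k<Suc N. \<bar>f k - seq_shift f k\<bar>) + \<bar>f (Suc N) - f N\<bar>"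
    by (simp add: seq_shift_def)
  also have "\<dots> = (if Suc N < m then f (Suc N) else 2 * f m - f (Suc N))"
  proof (cases "Suc N < m")
    case False
    show ?thesis
    proof (cases "N < m")
      case True
      then have "m = Suc N" using False by simp
      then show ?thesis using Suc uni True unfolding unimodal_at_def by auto
    qed (use Suc uni False in \<open>auto simp: unimodal_at_def\<close>)
  qed (use Suc uni in \<open>auto simp: unimodal_at_def\<close>)
  finally show ?case .
qed

text \<open>Stated for all index pairs with equal sums rather than as \<open>f (k - 1) f (k + 1) \<le> f k\<^sup>2\<close>,
  so that nothing needs to be known about the support.\<close>
definition log_concave_seq :: "(nat \<Rightarrow> real) \<Rightarrow> bool" where
  "log_concave_seq f \<longleftrightarrow>
     (\<forall>x u v y. x \<le> u \<longrightarrow> u \<le> y \<longrightarrow> x + y = u + v \<longrightarrow> f x * f y \<le> f u * f v)"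

lemma log_concave_seqD:
  "log_concave_seq f \<Longrightarrow> x \<le> u \<Longrightarrow> u \<le> y \<Longrightarrow> x + y = u + v \<Longrightarrow> f x * f y \<le> f u * f v"
  unfolding log_concave_seq_def by blast

lemma conv_bernoulli_mult:
  "conv_bernoulli f a i * conv_bernoulli f a j = (1 - a)^2 * (f i * f j)
     + (1 - a) * a * (f i * seq_shift f j) + (1 - a) * a * (seq_shift f i * f j)
     + a^2 * (seq_shift f i * seq_shift f j)"
  by (simp add: conv_bernoulli_def power2_eq_square algebra_simps)

lemma log_concave_seq_conv_bernoulli:
  assumes lc: "log_concave_seq f" and nonneg: "\<And>k. 0 \<le> f k" and a: "0 \<le> a" "a \<le> 1"
  shows "log_concave_seq (conv_bernoulli f a)"
  unfolding log_concave_seq_def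
proof (intro allI impI)
  fix x u v y :: nat
  assume h: "x \<le> u" "u \<le> y" "x + y = u + v"
  let ?g = "conv_bernoulli f a" and ?s = "seq_shift f"
  show "?g x * ?g y \<le> ?g u * ?g v"
  proof (cases "u = x \<or> u = y")
    case True
    then have "(u = x \<and> v = y) \<or> (u = y \<and> v = x)" using h by auto
    then show ?thesis by (auto simp: mult.commute)
  next
    case False
    then have "x < u" "u < y" "x < v" "v < y" using h by auto
    then obtain u' v' y' where succ: "u = Suc u'" "v = Suc v'" "y = Suc y'"
      by (metis less_imp_Suc_add)
    have ff: "f x * f y \<le> f u * f v" using lc h by (rule log_concave_seqD)
    have fs: "f x * ?s y \<le> f u * ?s v"
      using log_concave_seqD[OF lc, of x u y' v'] h \<open>u < y\<close> succ by (simp add: seq_shift_def)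
    have ss: "?s x * ?s y \<le> ?s u * ?s v" and sf: "?s x * f y \<le> ?s u * f v"
    proof (atomize(full), cases x)
      case (Suc x')
      then show "?s x * ?s y \<le> ?s u * ?s v \<and> ?s x * f y \<le> ?s u * f v"
        using log_concave_seqD[OF lc, of x' u' y' v'] log_concave_seqD[OF lc, of x' u' y v]
          h Suc succ by (simp add: seq_shift_def)
    qed (use nonneg in \<open>simp add: seq_shift_def\<close>)
    have c: "0 \<le> (1-a)^2" "0 \<le> (1-a) * a" "0 \<le> a^2" using a by auto
    show ?thesis unfolding conv_bernoulli_mult
      using mult_left_mono[OF ff c(1)] mult_left_mono[OF fs c(2)] mult_left_mono[OF sf c(2)]
        mult_left_mono[OF ss c(3)] by linarith
  qed
qed

lemma bern_dens_log_concave: "\<forall>j<n. 0 \<le> r j \<and> r j \<le> 1 \<Longrightarrow> log_concave_seq (bern_dens r n)"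
proof (induction n)
  case 0
  show ?case unfolding log_concave_seq_def by auto
next
  case (Suc n)
  then show ?case
    using log_concave_seq_conv_bernoulli[of "bern_dens r n" "r n"] bern_dens_nonneg[of n r] by simp
qed

section \<open>Anticoncentration and the BCV constant\<close>

lemma sum_succ_sq_div_pow2: "(\<Sum>t<T. (real t + 1)^2 / 2^t) = 12 - 2 * (real T^2 + 4 * real T + 6) / 2^T"
proof (induction T)
  case (Suc T)
  have "(\<Sum>t<Suc T. (real t + 1)^2 / 2^t)
      = 12 - 2 * (real T^2 + 4 * real T + 6) / 2^T + (real T + 1)^2 / 2^T"
    using Suc.IH by simp
  also have "\<dots> = 12 - 2 * (real (Suc T)^2 + 4 * real (Suc T) + 6) / 2^(Suc T)"
    by (simp add: field_simps power2_eq_square)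
  finally show ?case .
qed simp

lemma submultiplicative_geometric_decay:
  fixes h :: "nat \<Rightarrow> real"
  assumes nonneg: "\<And>j. 0 \<le> h j" and pos: "0 < h 0"
    and submult: "\<And>a b. h 0 * h (a + b) \<le> h a * h b" and half: "h L \<le> h 0 / 2"
  shows "h (t * L) \<le> h 0 / 2 ^ t"
proof (induction t)
  case (Suc t)
  have "h 0 * h (Suc t * L) \<le> h L * h (t * L)" using submult[of L "t * L"] by (simp add: add.commute)
  also have "\<dots> \<le> (h 0 / 2) * (h 0 / 2 ^ t)" using half Suc.IH nonneg pos by (intro mult_mono) auto
  finally show ?case using pos by (simp add: field_simps)
qed simp

lemma antimono_halving_index:
  fixes h :: "nat \<Rightarrow> real"
  assumes nonneg: "\<And>j. 0 \<le> h j" and antimono: "\<And>j. h (Suc j) \<le> h j" and pos: "0 < h 0"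
    and mass: "\<And>N. (\<Sum>j<N. h j) \<le> 1"
  obtains L where "1 \<le> L" "real L \<le> 3 / h 0" "h L \<le> h 0 / 2"
proof -
  define M where "M = h 0"
  have mass_L: "real (Suc L) * h L \<le> 1" for L
  proof -
    have "real (Suc L) * h L \<le> (\<Sum>j<Suc L. h j)"
      using sum_mono[of "{..<Suc L}" "\<lambda>_. h L" h] lift_Suc_antimono_le[of h, OF antimono] by simp
    then show ?thesis using mass[of "Suc L"] by linarith
  qed
  have M: "0 < M" "M \<le> 1" using pos mass_L[of 0] by (simp_all add: M_def)
  define L where "L = nat \<lceil>2 / M\<rceil>"
  have L: "2 / M \<le> real L" "real L \<le> 3 / M" "1 \<le> L"
  proof -
    show "2 / M \<le> real L" unfolding L_def by linarith
    have "real L = of_int \<lceil>2 / M\<rceil>" unfolding L_def using M by simp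
    then have "real L < 2 / M + 1" by linarith
    also have "\<dots> \<le> 3 / M" using M by (simp add: field_simps)
    finally show "real L \<le> 3 / M" by simp
    have "2 \<le> 2 / M" using M by (simp add: field_simps)
    with \<open>2 / M \<le> real L\<close> show "1 \<le> L" by linarith
  qed
  have "(2 / M) * h L \<le> real (Suc L) * h L"
    using L(1) nonneg[of L] by (intro mult_right_mono) auto
  then have "(2 / M) * h L \<le> 1" using mass_L[of L] by linarith
  then have "h L \<le> M / 2" using M by (simp add: field_simps)
  with L that show ?thesis by (simp add: M_def)
qed

text \<open>After \<open>L \<approx> 2 / h 0\<close> steps a nonincreasing sequence of total mass at most one has
  halved, so \<open>h (t L) \<le> h 0 / 2\<^sup>t\<close>; summing over blocks of length \<open>L\<close> gives the bound
  \<open>12 L\<^sup>3 h 0 \<le> 324 / (h 0)\<^sup>2\<close>.\<close>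
lemma tail_second_moment_le:
  fixes h :: "nat \<Rightarrow> real"
  assumes nonneg: "\<And>j. 0 \<le> h j" and antimono: "\<And>j. h (Suc j) \<le> h j" and pos: "0 < h 0"
    and submult: "\<And>a b. h 0 * h (a + b) \<le> h a * h b"
    and mass: "\<And>N. (\<Sum>j<N. h j) \<le> 1"
  shows "(\<Sum>j<N. (real j)^2 * h j) \<le> 324 / (h 0)^2"
proof -
  define M where "M = h 0"
  have M: "0 < M" using pos by (simp add: M_def)
  have mono: "h j \<le> h i" if "i \<le> j" for i j using lift_Suc_antimono_le[of h, OF antimono that] .
  obtain L where L: "1 \<le> L" "real L \<le> 3 / M" "h L \<le> M / 2"
    using antimono_halving_index[OF nonneg antimono pos mass] unfolding M_def by blast
  have decay: "h (t * L) \<le> M / 2 ^ t" for t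
    using submultiplicative_geometric_decay[OF nonneg pos submult] L(3) unfolding M_def by blast
  have block: "(real j)^2 * h j \<le> real L^2 * M * ((real t + 1)^2 / 2^t)"
    if "j \<in> {t * L..<t * L + L}" for j t
  proof -
    have "h j \<le> M / 2^t" using mono[of "t * L" j] decay[of t] that by simp
    moreover have "real j \<le> (real t + 1) * real L"
      using that by (simp add: algebra_simps flip: of_nat_mult of_nat_add)
    then have "(real j)^2 \<le> ((real t + 1) * real L)^2" by (intro power_mono) auto
    ultimately have "(real j)^2 * h j \<le> ((real t + 1) * real L)^2 * (M / 2^t)"
      using nonneg by (intro mult_mono) auto
    then show ?thesis by (simp add: power_mult_distrib mult_ac)
  qed
  have "(\<Sum>j<N. (real j)^2 * h j) \<le> (\<Sum>j<N * L. (real j)^2 * h j)"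
    using L(1) nonneg by (intro sum_mono2) auto
  also have "\<dots> = (\<Sum>t<N. \<Sum>j\<in>{t * L..<t * L + L}. (real j)^2 * h j)"
    by (rule sum.nat_group[symmetric])
  also have "\<dots> \<le> (\<Sum>t<N. \<Sum>j\<in>{t * L..<t * L + L}. real L^2 * M * ((real t + 1)^2 / 2^t))"
    by (intro sum_mono block)
  also have "\<dots> = real L^3 * M * (\<Sum>t<N. (real t + 1)^2 / 2^t)"
    by (simp add: sum_distrib_left power3_eq_cube power2_eq_square algebra_simps)
  also have "\<dots> \<le> real L^3 * M * 12"
    unfolding sum_succ_sq_div_pow2 using M by (intro mult_left_mono) auto
  also have "\<dots> \<le> (3 / M)^3 * M * 12"
    using L M by (intro mult_right_mono power_mono) auto
  also have "\<dots> = 324 / M^2" using M by (simp add: field_simps power3_eq_cube power2_eq_square)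
  finally show ?thesis unfolding M_def .
qed

lemma unimodal_right_tail_le:
  assumes nonneg: "\<And>k. 0 \<le> f k" and lc: "log_concave_seq f" and uni: "unimodal_at f m"
    and mass: "\<And>N. (\<Sum>k<N. f k) \<le> 1" and pos: "0 < f m"
  shows "(\<Sum>k\<in>{m..<N}. (real k - real m)^2 * f k) \<le> 324 / (f m)^2"
proof -
  define h where "h j = f (m + j)" for j
  have "(\<Sum>k\<in>{m..<N}. (real k - real m)^2 * f k) = (\<Sum>j<N - m. (real j)^2 * h j)"
    by (simp add: sum.atLeastLessThan_shift_0 h_def atLeast0LessThan)
  also have "\<dots> \<le> 324 / (h 0)^2"
  proof (rule tail_second_moment_le)
    show "h (Suc j) \<le> h j" for j using uni by (simp add: h_def unimodal_at_def)
    show "h 0 * h (a + b) \<le> h a * h b" for a b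
      unfolding h_def by (rule log_concave_seqD[OF lc]) auto
    show "(\<Sum>j<N. h j) \<le> 1" for N
    proof -
      have "(\<Sum>j<N. h j) = (\<Sum>k\<in>{m..<N + m}. f k)"
        by (simp add: sum.atLeastLessThan_shift_0 h_def atLeast0LessThan)
      also have "\<dots> \<le> (\<Sum>k<N + m. f k)" using nonneg by (intro sum_mono2) auto
      finally show ?thesis using mass[of "N + m"] by linarith
    qed
  qed (use nonneg pos in \<open>simp_all add: h_def\<close>)
  finally show ?thesis by (simp add: h_def)
qed

lemma unimodal_left_tail_le:
  assumes nonneg: "\<And>k. 0 \<le> f k" and lc: "log_concave_seq f" and uni: "unimodal_at f m"
    and mass: "\<And>N. (\<Sum>k<N. f k) \<le> 1" and pos: "0 < f m"
  shows "(\<Sum>k<m. (real k - real m)^2 * f k) \<le> 324 / (f m)^2"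
proof -
  define h where "h j = (if j \<le> m then f (m - j) else 0)" for j
  have "(\<Sum>k<m. (real k - real m)^2 * f k) = (\<Sum>i<m. (real (Suc i))^2 * h (Suc i))"
    by (subst sum.nat_diff_reindex[symmetric])
      (auto intro!: sum.cong simp: h_def of_nat_diff power2_eq_square algebra_simps)
  also have "\<dots> = (\<Sum>j<Suc m. (real j)^2 * h j)"
    by (subst sum.lessThan_Suc_shift) simp
  also have "\<dots> \<le> 324 / (h 0)^2"
  proof (rule tail_second_moment_le)
    show "h (Suc j) \<le> h j" for j
      using unimodal_at_mono[OF uni, of "m - Suc j" "m - j"] nonneg by (simp add: h_def)
    show "h 0 * h (a + b) \<le> h a * h b" for a b
    proof (cases "a + b \<le> m")
      case True
      then have "f (m - (a + b)) * f m \<le> f (m - a) * f (m - b)"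
        by (intro log_concave_seqD[OF lc]) auto
      then show ?thesis using True by (simp add: h_def mult.commute)
    qed (use nonneg in \<open>auto simp: h_def\<close>)
    show "(\<Sum>j<N. h j) \<le> 1" for N
    proof -
      have "(\<Sum>j<N. h j) \<le> (\<Sum>j<max N (Suc m). h j)"
        using nonneg by (intro sum_mono2) (auto simp: h_def)
      also have "\<dots> = (\<Sum>j<Suc m. h j)"
        by (rule sum.mono_neutral_right) (auto simp: h_def)
      also have "\<dots> = (\<Sum>k<Suc m. f k)"
        by (subst sum.nat_diff_reindex[symmetric]) (auto intro!: sum.cong simp: h_def)
      finally show ?thesis using mass[of "Suc m"] by linarith
    qed
  qed (use nonneg pos in \<open>simp_all add: h_def\<close>)
  finally show ?thesis by (simp add: h_def)
qed

lemma bern_dens_le_sqrt_648: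
  assumes r: "\<forall>j<n. 0 \<le> r j \<and> r j \<le> 1" and var: "0 < bern_var r n"
  shows "bern_dens r n k \<le> sqrt 648 / sqrt (bern_var r n)"
proof -
  let ?f = "bern_dens r n"
  obtain m where "m \<le> n" and uni: "unimodal_at ?f m" using bern_dens_unimodal[OF r] by auto
  have nonneg: "0 \<le> ?f k" for k by (rule bern_dens_nonneg[OF r])
  have lc: "log_concave_seq ?f" by (rule bern_dens_log_concave[OF r])
  have mass: "(\<Sum>k<N. ?f k) \<le> 1" for N by (rule sum_bern_dens_le_1[OF r])
  have pos: "0 < ?f m"
  proof (rule ccontr)
    assume "\<not> 0 < ?f m"
    then have "(\<Sum>k<Suc n. ?f k) \<le> 0"
      using unimodal_at_max[OF uni] by (intro sum_nonpos) (meson not_less order_trans)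
    then show False using sum_bern_dens[of n "Suc n" r] by simp
  qed
  have split: "{..<Suc n} = {..<m} \<union> {m..<Suc n}" using \<open>m \<le> n\<close> by auto
  have "bern_var r n \<le> (\<Sum>k<Suc n. (real k - real m)^2 * ?f k)"
    using sum_sq_dev_bern_dens[of n "Suc n" "real m" r] by simp
  also have "\<dots> = (\<Sum>k<m. (real k - real m)^2 * ?f k)
      + (\<Sum>k\<in>{m..<Suc n}. (real k - real m)^2 * ?f k)"
    unfolding split by (rule sum.union_disjoint) auto
  also have "\<dots> \<le> 324 / (?f m)^2 + 324 / (?f m)^2"
    by (intro add_mono unimodal_left_tail_le[OF nonneg lc uni mass pos]
        unimodal_right_tail_le[OF nonneg lc uni mass pos])
  finally have "bern_var r n * (?f m)^2 \<le> 648" using pos by (simp add: field_simps)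
  moreover have "(?f k)^2 \<le> (?f m)^2" using nonneg unimodal_at_max[OF uni] by (intro power_mono)
  ultimately have "bern_var r n * (?f k)^2 \<le> 648"
    using var by (meson mult_left_mono order_trans less_imp_le)
  then have "(?f k)^2 \<le> 648 / bern_var r n" using var by (simp add: field_simps)
  then have "?f k \<le> sqrt (648 / bern_var r n)" by (rule real_le_rsqrt)
  then show ?thesis by (simp add: real_sqrt_divide)
qed

definition bcv_constants :: "real set" where
  "bcv_constants = {c. \<forall>(n::nat) (p::nat \<Rightarrow> real).
      (\<forall>i<n. 0 \<le> p i \<and> p i \<le> 1) \<longrightarrow> bern_var p n > 0 \<longrightarrow>
      (\<forall>k. pmf (bern_sum p n) k \<le> c / sqrt (bern_var p n))}"

lemma bern_dens_le_eta_BCV: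
  assumes r: "\<forall>j<n. 0 \<le> r j \<and> r j \<le> 1" and var: "0 < bern_var r n"
  shows "bern_dens r n k \<le> eta_BCV / sqrt (bern_var r n)"
proof -
  have "sqrt 648 \<in> bcv_constants"
    unfolding bcv_constants_def using bern_dens_le_sqrt_648 pmf_bern_sum by simp
  then have "bern_dens r n k * sqrt (bern_var r n) \<le> Inf bcv_constants"
  proof (intro cInf_greatest)
    fix c assume "c \<in> bcv_constants"
    then have "pmf (bern_sum r n) k \<le> c / sqrt (bern_var r n)"
      unfolding bcv_constants_def using r var by blast
    then show "bern_dens r n k * sqrt (bern_var r n) \<le> c"
      using pmf_bern_sum[OF r] var by (simp add: field_simps)
  qed auto
  then show ?thesis using var by (simp add: eta_BCV_def bcv_constants_def field_simps)
qed

lemma eta_BCV_nonneg: "0 \<le> eta_BCV"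
proof -
  let ?r = "\<lambda>_::nat. 1/2 :: real"
  have var: "bern_var ?r (Suc 0) = 1/4" by (simp add: bern_var_def)
  have le: "bern_dens ?r (Suc 0) 0 \<le> eta_BCV / sqrt (bern_var ?r (Suc 0))"
    by (rule bern_dens_le_eta_BCV) (auto simp: var)
  have half: "bern_dens ?r (Suc 0) 0 = 1/2" by (simp add: conv_bernoulli_def seq_shift_def)
  have "sqrt (1/4) = (1/2 :: real)" by (rule real_sqrt_unique) (simp_all add: power2_eq_square)
  then have "1/2 \<le> eta_BCV / (1/2)" using le unfolding half var by simp
  then show ?thesis by simp
qed

lemma bern_var_nonneg: "\<forall>j<n. 0 \<le> r j \<and> r j \<le> 1 \<Longrightarrow> 0 \<le> bern_var r n"
  unfolding bern_var_def by (intro sum_nonneg) auto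

text \<open>For \<open>s \<le> \<eta>\<^sup>2 + 1/4\<close> the trivial bound \<open>w \<le> 1\<close> suffices, otherwise the
  anticoncentration bound does; the constant \<open>5/4\<close> is where the two regimes meet.\<close>
lemma le_sqrt_div_sqrt_succ:
  fixes w eta v s :: real
  assumes "0 \<le> w" "w \<le> 1" and anticonc: "0 < v \<Longrightarrow> w \<le> eta / sqrt v"
    and "s - 1/4 \<le> v" "0 \<le> s" "0 \<le> eta"
  shows "w \<le> sqrt (5/4 + eta^2) / sqrt (s + 1)"
proof -
  have "w^2 \<le> (5/4 + eta^2) / (s + 1)"
  proof (cases "s + 1 \<le> 5/4 + eta^2")
    case True
    have "w^2 \<le> 1" using assms by (simp add: power_le_one)
    also have "1 \<le> (5/4 + eta^2) / (s + 1)" using True assms by simp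
    finally show ?thesis .
  next
    case False
    define u where "u = s - 1/4"
    have "eta^2 < u" using False by (simp add: u_def)
    then have u: "eta^2 < u" "0 < u" using zero_le_power2[of eta] by linarith+
    then have "w \<le> eta / sqrt v" using anticonc assms u_def by simp
    also have "\<dots> \<le> eta / sqrt u" using assms u u_def
      by (intro divide_left_mono) (auto simp: real_sqrt_le_mono)
    finally have "w^2 \<le> (eta / sqrt u)^2" using assms by (intro power_mono) auto
    also have "\<dots> = eta^2 / u" using u by (simp add: power_divide)
    also have "\<dots> \<le> (5/4 + eta^2) / (s + 1)"
      using u assms by (simp add: frac_le_eq u_def field_simps)
    finally show ?thesis .
  qed
  then have "w \<le> sqrt ((5/4 + eta^2) / (s + 1))" by (rule real_le_rsqrt)
  then show ?thesis by (simp add: real_sqrt_divide)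
qed

lemma bern_dens_le_C_BCV:
  assumes r: "\<forall>j<n. 0 \<le> r j \<and> r j \<le> 1" and "0 \<le> s" "s - 1/4 \<le> bern_var r n"
  shows "bern_dens r n k \<le> C_BCV / sqrt (s + 1)"
proof -
  have nonneg: "0 \<le> bern_dens r n j" for j by (rule bern_dens_nonneg[OF r])
  have "bern_dens r n k \<le> (\<Sum>j<Suc k. bern_dens r n j)" using nonneg by (intro member_le_sum) auto
  also have "\<dots> \<le> 1" by (rule sum_bern_dens_le_1[OF r])
  finally have "bern_dens r n k \<le> 1" .
  with nonneg show ?thesis
    using bern_dens_le_eta_BCV[OF r] assms(3,2) eta_BCV_nonneg
    unfolding C_BCV_def by (rule le_sqrt_div_sqrt_succ)
qed

section \<open>Differentiating along a segment\<close>

definition drop_index :: "nat \<Rightarrow> (nat \<Rightarrow> real) \<Rightarrow> nat \<Rightarrow> real" where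
  "drop_index i r j = (if j < i then r j else r (Suc j))"

lemma bern_var_drop_index:
  "i < n \<Longrightarrow> bern_var r n = bern_var (drop_index i r) (n - 1) + r i * (1 - r i)"
proof (induction n)
  case (Suc m)
  show ?case
  proof (cases "i = m")
    case True
    have "bern_var (drop_index i r) m = bern_var r m"
      unfolding bern_var_def by (rule sum.cong) (auto simp: drop_index_def True)
    then show ?thesis using True by (simp add: bern_var_def)
  next
    case False
    then obtain m' where "i < m" "m = Suc m'" using Suc.prems by (cases m) auto
    then show ?thesis using Suc.IH by (simp add: bern_var_def drop_index_def)
  qed
qed simp

text \<open>The partial derivative of \<^term>\<open>bern_dens r n k\<close> in \<open>r i\<close>, for \<open>i < n\<close>.\<close>
definition bern_dens_partial :: "(nat \<Rightarrow> real) \<Rightarrow> nat \<Rightarrow> nat \<Rightarrow> nat \<Rightarrow> real" where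
  "bern_dens_partial r n i k =
     seq_shift (bern_dens (drop_index i r) (n - 1)) k - bern_dens (drop_index i r) (n - 1) k"

lemma bern_dens_partial_Suc:
  assumes "i < n"
  shows "bern_dens_partial r (Suc n) i k = conv_bernoulli (bern_dens_partial r n i) (r n) k"
proof -
  obtain n' where n: "n = Suc n'" using assms by (cases n) auto
  have "bern_dens (drop_index i r) n = conv_bernoulli (bern_dens (drop_index i r) n') (r n)"
    using assms n by (simp add: drop_index_def)
  then show ?thesis
    by (cases k) (simp_all add: bern_dens_partial_def n conv_bernoulli_def seq_shift_def algebra_simps)
qed

lemma bern_dens_partial_last:
  "bern_dens_partial r (Suc n) n k = seq_shift (bern_dens r n) k - bern_dens r n k"
proof -
  have "bern_dens (drop_index n r) n = bern_dens r n"
    by (rule bern_dens_cong) (simp add: drop_index_def)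
  then show ?thesis by (simp add: bern_dens_partial_def)
qed

lemma conv_bernoulli_sum:
  "conv_bernoulli (\<lambda>k. \<Sum>i\<in>I. c i * g i k) a k = (\<Sum>i\<in>I. c i * conv_bernoulli (g i) a k)"
  by (simp add: conv_bernoulli_def seq_shift_def sum_distrib_left ring_distribs sum.distrib
      mult.left_commute)

definition lin_interp :: "(nat \<Rightarrow> real) \<Rightarrow> (nat \<Rightarrow> real) \<Rightarrow> real \<Rightarrow> nat \<Rightarrow> real" where
  "lin_interp p q t j = p j + t * (q j - p j)"

lemma has_real_derivative_bern_dens:
  "((\<lambda>t. bern_dens (lin_interp p q t) n k) has_real_derivative
     (\<Sum>i<n. (q i - p i) * bern_dens_partial (lin_interp p q t) n i k)) (at t)"
proof (induction n arbitrary: k)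
  case (Suc n)
  define r where "r = lin_interp p q t"
  define F' where "F' k = (\<Sum>i<n. (q i - p i) * bern_dens_partial r n i k)" for k
  have F: "((\<lambda>t. bern_dens (lin_interp p q t) n k) has_real_derivative F' k) (at t)" for k
    using Suc.IH unfolding F'_def r_def .
  have shift_F: "((\<lambda>t. seq_shift (bern_dens (lin_interp p q t) n) k)
      has_real_derivative seq_shift F' k) (at t)"
    using F by (cases k) (simp_all add: seq_shift_def)
  have a: "((\<lambda>t. lin_interp p q t n) has_real_derivative (q n - p n)) (at t)"
    unfolding lin_interp_def by (auto intro!: derivative_eq_intros)
  have "((\<lambda>t. bern_dens (lin_interp p q t) (Suc n) k) has_real_derivative
      (0 - (q n - p n)) * bern_dens r n k + F' k * (1 - r n)
      + ((q n - p n) * seq_shift (bern_dens r n) k + seq_shift F' k * r n)) (at t)"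
    unfolding bern_dens.simps conv_bernoulli_def r_def
    by (intro DERIV_add DERIV_mult DERIV_diff DERIV_const a F shift_F)
  also have "(0 - (q n - p n)) * bern_dens r n k + F' k * (1 - r n)
      + ((q n - p n) * seq_shift (bern_dens r n) k + seq_shift F' k * r n)
      = conv_bernoulli F' (r n) k + (q n - p n) * bern_dens_partial r (Suc n) n k"
    by (simp add: bern_dens_partial_last conv_bernoulli_def algebra_simps)
  also have "conv_bernoulli F' (r n) k = (\<Sum>i<n. (q i - p i) * bern_dens_partial r (Suc n) i k)"
    unfolding F'_def conv_bernoulli_sum by (rule sum.cong) (simp_all add: bern_dens_partial_Suc)
  finally show ?case by (simp add: r_def)
qed simp

lemma sum_abs_bern_dens_partial_le:
  assumes r: "\<forall>j<n. 0 \<le> r j \<and> r j \<le> 1" and "i < n"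
  shows "(\<Sum>k<Suc n. \<bar>bern_dens_partial r n i k\<bar>) \<le> 2 * C_BCV / sqrt (bern_var r n + 1)"
proof -
  obtain m where n: "n = Suc m" using \<open>i < n\<close> by (cases n) auto
  let ?r = "drop_index i r"
  have r': "\<forall>j<m. 0 \<le> ?r j \<and> ?r j \<le> 1" using r n by (auto simp: drop_index_def)
  have nonneg: "0 \<le> bern_dens ?r m k" for k by (rule bern_dens_nonneg[OF r'])
  obtain m0 where "m0 \<le> m" and uni: "unimodal_at (bern_dens ?r m) m0"
    using bern_dens_unimodal[OF r'] by auto
  have "(\<Sum>k<Suc n. \<bar>bern_dens_partial r n i k\<bar>)
      = (\<Sum>k<Suc (Suc m). \<bar>bern_dens ?r m k - seq_shift (bern_dens ?r m) k\<bar>)"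
    by (simp add: bern_dens_partial_def n abs_minus_commute)
  also have "\<dots> = 2 * bern_dens ?r m m0"
    using sum_abs_diff_seq_shift[OF uni nonneg, of "Suc m"] \<open>m0 \<le> m\<close> bern_dens_eq_0[of m "Suc m"]
    by simp
  also have "\<dots> \<le> 2 * (C_BCV / sqrt (bern_var r n + 1))"
  proof -
    have "1/4 - r i * (1 - r i) = (r i - 1/2)^2" by (simp add: power2_eq_square algebra_simps)
    then have "r i * (1 - r i) \<le> 1/4" using zero_le_power2[of "r i - 1/2"] by linarith
    then have "bern_var r n - 1/4 \<le> bern_var ?r m"
      using bern_var_drop_index[OF \<open>i < n\<close>, of r] n by simp
    then have "bern_dens ?r m m0 \<le> C_BCV / sqrt (bern_var r n + 1)"
      by (rule bern_dens_le_C_BCV[OF r' bern_var_nonneg[OF r]])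
    then show ?thesis by linarith
  qed
  finally show ?thesis by simp
qed

lemma sum_abs_directional_deriv_le:
  assumes r: "\<forall>j<n. 0 \<le> r j \<and> r j \<le> 1"
  shows "(\<Sum>k<Suc n. \<bar>\<Sum>i<n. d i * bern_dens_partial r n i k\<bar>)
    \<le> (\<Sum>i<n. \<bar>d i\<bar>) * (2 * C_BCV / sqrt (bern_var r n + 1))"
proof -
  have "(\<Sum>k<Suc n. \<bar>\<Sum>i<n. d i * bern_dens_partial r n i k\<bar>)
      \<le> (\<Sum>k<Suc n. \<Sum>i<n. \<bar>d i\<bar> * \<bar>bern_dens_partial r n i k\<bar>)"
    by (intro sum_mono order.trans[OF sum_abs]) (simp add: abs_mult)
  also have "\<dots> = (\<Sum>i<n. \<bar>d i\<bar> * (\<Sum>k<Suc n. \<bar>bern_dens_partial r n i k\<bar>))"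
    by (simp only: sum_distrib_left) (rule sum.swap)
  also have "\<dots> \<le> (\<Sum>i<n. \<bar>d i\<bar> * (2 * C_BCV / sqrt (bern_var r n + 1)))"
    by (intro sum_mono mult_left_mono sum_abs_bern_dens_partial_le[OF r]) auto
  finally show ?thesis by (simp only: sum_distrib_right)
qed

lemma lin_interp_in_unit:
  assumes "\<forall>j<n. 0 \<le> p j \<and> p j \<le> 1" "\<forall>j<n. 0 \<le> q j \<and> q j \<le> 1" "0 \<le> t" "t \<le> 1"
  shows "\<forall>j<n. 0 \<le> lin_interp p q t j \<and> lin_interp p q t j \<le> 1"
proof (intro allI impI)
  fix j assume "j < n"
  have "lin_interp p q t j = (1 - t) * p j + t * q j" by (simp add: lin_interp_def algebra_simps)
  moreover have "0 \<le> (1 - t) * p j" "0 \<le> t * q j" "(1 - t) * p j \<le> 1 - t" "t * q j \<le> t"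
    using assms \<open>j < n\<close> by (auto intro: mult_left_le)
  ultimately show "0 \<le> lin_interp p q t j \<and> lin_interp p q t j \<le> 1" by linarith
qed

lemma bern_var_lin_interp_ge:
  assumes "0 \<le> t" "t \<le> 1"
  shows "(1 - t) * bern_var p n + t * bern_var q n \<le> bern_var (lin_interp p q t) n"
proof -
  have "bern_var (lin_interp p q t) n = (\<Sum>i<n. (1 - t) * (p i * (1 - p i)) + t * (q i * (1 - q i))
       + t * (1 - t) * (q i - p i)^2)"
    unfolding bern_var_def
    by (rule sum.cong) (simp_all add: lin_interp_def power2_eq_square algebra_simps)
  also have "\<dots> \<ge> (\<Sum>i<n. (1 - t) * (p i * (1 - p i)) + t * (q i * (1 - q i)))"
    using assms by (intro sum_mono) auto
  finally show ?thesis unfolding bern_var_def by (simp add: sum.distrib sum_distrib_left)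
qed

lemma affine_combination_pos:
  fixes A B t :: real
  assumes "0 < A" "0 < B" "0 \<le> t" "t \<le> 1"
  shows "0 < A + t * (B - A)"
proof (cases "t = 1")
  case False
  then have "0 < (1 - t) * A" "0 \<le> t * B" using assms by simp_all
  then show ?thesis by (simp add: algebra_simps)
qed (use assms in simp)

lemma sum_abs_deriv_lin_interp_le:
  assumes p: "\<forall>j<n. 0 \<le> p j \<and> p j \<le> 1" and q: "\<forall>j<n. 0 \<le> q j \<and> q j \<le> 1"
    and t: "0 \<le> t" "t \<le> 1"
  defines "A \<equiv> bern_var p n + 1" and "B \<equiv> bern_var q n + 1"
  shows "(\<Sum>k<Suc n. \<bar>\<Sum>i<n. (q i - p i) * bern_dens_partial (lin_interp p q t) n i k\<bar>)
    \<le> 2 * C_BCV * (\<Sum>i<n. \<bar>p i - q i\<bar>) / sqrt (A + t * (B - A))"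
proof -
  let ?r = "lin_interp p q t"
  have r: "\<forall>j<n. 0 \<le> ?r j \<and> ?r j \<le> 1" using lin_interp_in_unit[OF p q t] .
  have "A + t * (B - A) \<le> bern_var ?r n + 1"
    using bern_var_lin_interp_ge[OF t, of p n q] by (simp add: A_def B_def algebra_simps)
  moreover have "0 < A + t * (B - A)"
    using affine_combination_pos[of A B t] bern_var_nonneg[OF p] bern_var_nonneg[OF q] t
    by (simp add: A_def B_def)
  ultimately have var: "2 * C_BCV / sqrt (bern_var ?r n + 1) \<le> 2 * C_BCV / sqrt (A + t * (B - A))"
    by (intro divide_left_mono) (auto simp: C_BCV_def)
  have "(\<Sum>k<Suc n. \<bar>\<Sum>i<n. (q i - p i) * bern_dens_partial ?r n i k\<bar>)
      \<le> (\<Sum>i<n. \<bar>p i - q i\<bar>) * (2 * C_BCV / sqrt (bern_var ?r n + 1))"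
    using sum_abs_directional_deriv_le[OF r, of "\<lambda>i. q i - p i"] by (simp add: abs_minus_commute)
  also have "\<dots> \<le> (\<Sum>i<n. \<bar>p i - q i\<bar>) * (2 * C_BCV / sqrt (A + t * (B - A)))"
    using var by (intro mult_left_mono) auto
  finally show ?thesis by (simp add: mult_ac)
qed

section \<open>Integration along the segment\<close>

lemma diff_le_diff_of_deriv_le:
  fixes g h :: "real \<Rightarrow> real"
  assumes "a \<le> b"
    and "\<And>t. t \<in> {a..b} \<Longrightarrow> (g has_real_derivative g' t) (at t)"
    and "\<And>t. t \<in> {a..b} \<Longrightarrow> (h has_real_derivative h' t) (at t)"
    and "\<And>t. t \<in> {a..b} \<Longrightarrow> g' t \<le> h' t"
  shows "g b - g a \<le> h b - h a"
proof -
  have "(\<lambda>t. h t - g t) a \<le> (\<lambda>t. h t - g t) b"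
    by (rule deriv_nonneg_imp_mono[of a b _ "\<lambda>t. h' t - g' t"]) (use assms in \<open>auto intro: DERIV_diff\<close>)
  then show ?thesis by simp
qed

lemma mult_diff_div_diff_squares:
  fixes a b c :: real
  assumes "0 < a + b" "a \<noteq> b"
  shows "c * (b - a) / (b^2 - a^2) = c / (a + b)"
proof -
  have "b^2 - a^2 = (b - a) * (a + b)" by (simp add: power2_eq_square algebra_simps)
  moreover have "b - a \<noteq> 0" using assms by simp
  ultimately show ?thesis using assms by simp
qed

lemma diff_le_of_deriv_le_inv_sqrt_affine:
  fixes g :: "real \<Rightarrow> real"
  assumes "0 < A" "0 < B"
    and deriv: "\<And>t. t \<in> {0..1} \<Longrightarrow> (g has_real_derivative g' t) (at t)"
    and bound: "\<And>t. t \<in> {0..1} \<Longrightarrow> g' t \<le> K / sqrt (A + t * (B - A))"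
  shows "g 1 - g 0 \<le> 2 * K / (sqrt A + sqrt B)"
proof (cases "A = B")
  case True
  have "g 1 - g 0 \<le> K / sqrt A * 1 - K / sqrt A * 0"
    by (rule diff_le_diff_of_deriv_le[OF _ deriv, where h = "(*) (K / sqrt A)" and h' = "\<lambda>_. K / sqrt A"])
      (use bound True in \<open>auto intro: DERIV_cmult_Id\<close>)
  then show ?thesis using True assms by simp
next
  case False
  define H where "H t = 2 * K / (B - A) * sqrt (A + t * (B - A))" for t
  have pos: "0 < A + t * (B - A)" if "t \<in> {0..1}" for t
    using affine_combination_pos[OF assms(1,2)] that by simp
  have "g 1 - g 0 \<le> H 1 - H 0"
  proof (rule diff_le_diff_of_deriv_le[OF _ deriv])
    fix t :: real assume t: "t \<in> {0..1}"
    have "((\<lambda>t. A + t * (B - A)) has_real_derivative B - A) (at t)"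
      by (auto intro!: derivative_eq_intros)
    from DERIV_chain2[OF DERIV_real_sqrt[OF pos[OF t]] this]
    have "(H has_real_derivative 2 * K / (B - A) * (inverse (sqrt (A + t * (B - A))) / 2 * (B - A))) (at t)"
      unfolding H_def[abs_def] by (rule DERIV_cmult)
    also have "2 * K / (B - A) * (inverse (sqrt (A + t * (B - A))) / 2 * (B - A)) = K / sqrt (A + t * (B - A))"
      using False pos[OF t] by (simp add: field_simps)
    finally show "(H has_real_derivative K / sqrt (A + t * (B - A))) (at t)" .
  qed (use bound in auto)
  also have "H 1 - H 0 = 2 * K * (sqrt B - sqrt A) / ((sqrt B)^2 - (sqrt A)^2)"
    using assms by (simp add: H_def right_diff_distrib diff_divide_distrib)
  also have "\<dots> = 2 * K / (sqrt A + sqrt B)"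
    using False assms by (intro mult_diff_div_diff_squares) (auto intro: add_pos_pos)
  finally show ?thesis .
qed

lemma sum_abs_bern_dens_diff_le:
  assumes p: "\<forall>j<n. 0 \<le> p j \<and> p j \<le> 1" and q: "\<forall>j<n. 0 \<le> q j \<and> q j \<le> 1"
  shows "(\<Sum>k<Suc n. \<bar>bern_dens p n k - bern_dens q n k\<bar>)
    \<le> 4 * C_BCV * (\<Sum>i<n. \<bar>p i - q i\<bar>) / (sqrt (bern_var p n + 1) + sqrt (bern_var q n + 1))"
proof -
  define A where "A = bern_var p n + 1"
  define B where "B = bern_var q n + 1"
  define sg where "sg k = sgn (bern_dens q n k - bern_dens p n k)" for k
  define g where "g t = (\<Sum>k<Suc n. sg k * bern_dens (lin_interp p q t) n k)" for t
  define g' where "g' t = (\<Sum>k<Suc n. sg k *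
      (\<Sum>i<n. (q i - p i) * bern_dens_partial (lin_interp p q t) n i k))" for t
  have A: "1 \<le> A" and B: "1 \<le> B"
    using bern_var_nonneg[OF p] bern_var_nonneg[OF q] by (simp_all add: A_def B_def)
  have "lin_interp p q 1 = q" "lin_interp p q 0 = p" by (auto simp: lin_interp_def)
  then have "g 1 - g 0 = (\<Sum>k<Suc n. sg k * (bern_dens q n k - bern_dens p n k))"
    by (simp add: g_def right_diff_distrib sum_subtractf)
  also have "\<dots> = (\<Sum>k<Suc n. \<bar>bern_dens p n k - bern_dens q n k\<bar>)"
    by (intro sum.cong) (auto simp: sg_def sgn_if)
  finally have "(\<Sum>k<Suc n. \<bar>bern_dens p n k - bern_dens q n k\<bar>) = g 1 - g 0" ..
  also have "g 1 - g 0 \<le> 2 * (2 * C_BCV * (\<Sum>i<n. \<bar>p i - q i\<bar>)) / (sqrt A + sqrt B)"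
  proof (rule diff_le_of_deriv_le_inv_sqrt_affine)
    show "(g has_real_derivative g' t) (at t)" for t
      unfolding g_def g'_def by (intro DERIV_sum DERIV_cmult has_real_derivative_bern_dens)
    fix t :: real assume t: "t \<in> {0..1}"
    have "g' t \<le> (\<Sum>k<Suc n. \<bar>\<Sum>i<n. (q i - p i) * bern_dens_partial (lin_interp p q t) n i k\<bar>)"
      unfolding g'_def by (intro sum_mono) (simp add: sg_def sgn_if abs_ge_self abs_ge_minus_self)
    also have "\<dots> \<le> 2 * C_BCV * (\<Sum>i<n. \<bar>p i - q i\<bar>) / sqrt (A + t * (B - A))"
      using sum_abs_deriv_lin_interp_le[OF p q] t by (simp add: A_def B_def)
    finally show "g' t \<le> 2 * C_BCV * (\<Sum>i<n. \<bar>p i - q i\<bar>) / sqrt (A + t * (B - A))" .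
  qed (use A B in auto)
  finally show ?thesis by (simp add: A_def B_def)
qed

theorem theorem6:
  fixes n :: nat and p q :: "nat \<Rightarrow> real"
  assumes "n \<ge> 1"
    and "\<forall>i<n. 0 \<le> p i \<and> p i \<le> 1"
    and "\<forall>i<n. 0 \<le> q i \<and> q i \<le> 1"
  shows "TV (bern_sum p n) (bern_sum q n)
     \<le> 2 * C_BCV * (\<Sum>i<n. \<bar>p i - q i\<bar>)
         / (sqrt (bern_var p n + 1) + sqrt (bern_var q n + 1))"
  using sum_abs_bern_dens_diff_le[OF assms(2,3)] unfolding TV_bern_sum[OF assms(2,3)] by simp

end
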